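(* Let $D\subseteq\mathbb{R}$, let $g:D\to\mathbb{R}$ be ordinal decreasing on $D$, let $a=\sup_{x\in D}(-g(x))$, and let $f$ be a real function that is ordinal decreasing up to $a$. Then the function $x\mapsto f(-g(x))$ is ordinal decreasing on $D$.
   Context: For a function $h$ defined on a set $E\subseteq\mathbb{R}$, a strictly decreasing sequence $x_1>x_2>\cdots$ in $E$ is $h$-bad if $h(x_1)>h(x_2)>\cdots$; $h$ is ordinal decreasing on $E$ if there is no infinite $h$-bad sequence in $E$. A function $f$ is ordinal decreasing up to $a$ if it is defined on $(-\infty,a]$ and is ordinal decreasing on $(-\infty,a]$. *)

theory Defs
  imports Complex_Main
begin

definition bad_seq :: "real set \<Rightarrow> (real \<Rightarrow> real) \<Rightarrow> (nat \<Rightarrow> real) \<Rightarrow> bool" where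
  "bad_seq E h x \<longleftrightarrow> (\<forall>n. x n \<in> E) \<and> (\<forall>n. x (Suc n) < x n) \<and> (\<forall>n. h (x (Suc n)) < h (x n))"

definition ordinal_decreasing_on :: "real set \<Rightarrow> (real \<Rightarrow> real) \<Rightarrow> bool" where
  "ordinal_decreasing_on E h \<longleftrightarrow> \<not> (\<exists>x. bad_seq E h x)"

definition ordinal_decreasing_up_to :: "(real \<Rightarrow> real) \<Rightarrow> real \<Rightarrow> bool" where
  "ordinal_decreasing_up_to f a \<longleftrightarrow> ordinal_decreasing_on {..a} f"

end

theory Submission
  imports Defs
begin

(* Given a bad sequence x for f o (-g), pass to a subsequence along which y n = -g (x n) is
   monotone. The values f (y n) strictly decrease, so consecutive y n differ and y is strictly
   monotone. If y increases, g decreases along the decreasing x: a bad sequence for g. If y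
   decreases, y itself is a bad sequence for f, and it stays below a = sup (-g). *)

lemma lift_Suc_antimono_less:
  fixes x :: "nat \<Rightarrow> 'a::order"
  assumes "\<And>n. x (Suc n) < x n" and "m < n"
  shows "x n < x m"
  using \<open>m < n\<close> by (induct m n rule: less_Suc_induct) (auto intro: assms(1) order.strict_trans)

lemma bad_seq_subseq:
  assumes "bad_seq E h x" and "strict_mono r"
  shows "bad_seq E h (x \<circ> r)"
proof -
  have "x (r (Suc n)) < x (r n)" and "h (x (r (Suc n))) < h (x (r n))" for n
    using assms lift_Suc_antimono_less[of x] lift_Suc_antimono_less[of "h \<circ> x"]
    by (auto simp: bad_seq_def strict_mono_def)
  with assms(1) show ?thesis
    by (simp add: bad_seq_def)
qed

lemma monoseq_strict_if_Suc_neq: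
  fixes s :: "nat \<Rightarrow> 'a::order"
  assumes "monoseq s" and "\<And>n. s (Suc n) \<noteq> s n"
  shows "(\<forall>n. s n < s (Suc n)) \<or> (\<forall>n. s (Suc n) < s n)"
proof -
  from assms(1) consider "\<forall>n. s n \<le> s (Suc n)" | "\<forall>n. s (Suc n) \<le> s n"
    unfolding monoseq_Suc by blast
  then show ?thesis
    using assms(2) by cases (metis order.not_eq_order_implies_strict)+
qed

lemma ordinal_decreasing_on_comp_uminus:
  assumes g: "ordinal_decreasing_on D g"
    and f: "ordinal_decreasing_on E f"
    and maps: "\<And>x. x \<in> D \<Longrightarrow> - g x \<in> E"
  shows "ordinal_decreasing_on D (\<lambda>x. f (- g x))"
  unfolding ordinal_decreasing_on_def
proof
  assume "\<exists>x. bad_seq D (\<lambda>x. f (- g x)) x"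
  then obtain x where bad: "bad_seq D (\<lambda>x. f (- g x)) x" ..
  obtain r where "strict_mono r" and mono: "monoseq (\<lambda>n. - g (x (r n)))"
    using seq_monosub[of "\<lambda>n. - g (x n)"] by blast
  from bad \<open>strict_mono r\<close> have bad_r: "bad_seq D (\<lambda>x. f (- g x)) (x \<circ> r)"
    by (rule bad_seq_subseq)
  then have "- g (x (r (Suc n))) \<noteq> - g (x (r n))" for n
    unfolding bad_seq_def by (metis comp_apply less_irrefl)
  with mono consider
      (increasing) "\<forall>n. - g (x (r n)) < - g (x (r (Suc n)))"
    | (decreasing) "\<forall>n. - g (x (r (Suc n))) < - g (x (r n))"
    using monoseq_strict_if_Suc_neq by blast
  then show False
  proof cases
    case increasing
    with bad_r have "bad_seq D g (x \<circ> r)"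
      by (simp add: bad_seq_def)
    with g show False
      by (auto simp: ordinal_decreasing_on_def)
  next
    case decreasing
    with bad_r maps have "bad_seq E f (\<lambda>n. - g (x (r n)))"
      by (simp add: bad_seq_def)
    with f show False
      by (auto simp: ordinal_decreasing_on_def)
  qed
qed

theorem lemma3:
  fixes D :: "real set" and g f :: "real \<Rightarrow> real" and a :: real
  assumes "D \<noteq> {}"
    and "bdd_above ((\<lambda>x. - g x) ` D)"
    and "ordinal_decreasing_on D g"
    and "a = (SUP x\<in>D. - g x)"
    and "ordinal_decreasing_up_to f a"
  shows "ordinal_decreasing_on D (\<lambda>x. f (- g x))"
proof (rule ordinal_decreasing_on_comp_uminus)
  show "ordinal_decreasing_on D g" by fact
  show "ordinal_decreasing_on {..a} f"
    using assms(5) by (simp add: ordinal_decreasing_up_to_def)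
  show "- g x \<in> {..a}" if "x \<in> D" for x
    using that assms(2,4) by (auto intro: cSUP_upper)
qed

end
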